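(* Let $\Gamma$ be a non-abelian torsion-free group and $\rho=(\rho_L,\rho_R):\Gamma\to G\times G$ an admissible representation such that $\rho_L,\rho_R$ are not conjugate in $G$. Let $J\subset\overline\Lambda(\rho)$ be a nonempty $\rho(\Gamma)$-invariant subset. Then $\overline E(J)=\overline E(\rho)$.
   Context: $E=\mathbb R^4$ with a quadratic form $Q$ of signature $(2,2)$ and bilinear form $\langle\cdot|\cdot\rangle$; anti-de Sitter space is $\{Q=-1\}$, $S(E)$ the sphere of rays, $P(E)$ the projective space; $\overline{\mathbb{ADS}}$ is the projection of $\{Q<0\}$ to $P(E)$, identified with $G=\mathrm{PSL}(2,\mathbb R)$, and $\overline{\mathrm{Ein}}_2$ the projection of the null cone $\{Q=0\}$. $G\times G\cong\mathrm{SO}_0(2,2)$ acts projectively ($g\mapsto g_Lgg_R^{-1}$). $\overline\Lambda(\rho)$ is the closure in $P(E)$ of the set of attractive fixed points in $P(E)$ of elements of $\rho(\Gamma)$; it lies in $\overline{\mathrm{Ein}}_2$. It is the projection of $\Lambda(\rho)\cup-\Lambda(\rho)$, where $\Lambda(\rho)\subset S(E)$ is a closed subset (one of the two minimal closed invariant subsets of $S(E)$) projecting injectively onto $\overline\Lambda(\rho)$; thus each $[p]\in\overline\Lambda(\rho)$ has a distinguished representative ray $p\in\Lambda(\rho)$ (take any vector representative of this ray). For $J\subset\overline\Lambda(\rho)$, $\overline E(J)$ is the interior of $\{[x]\in\overline{\mathbb{ADS}}:\ \langle x|p\rangle\langle x|q\rangle>0$ for all $[p],[q]\in J$ with $p,q\in\Lambda(\rho)\}$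 (the sign is independent of the representative $x$), and $\overline E(\rho)=\overline E(\overline\Lambda(\rho))$. Admissible: faithful, discrete image, and lifting to a representation into $\mathrm{Isom}_0(\widetilde{\mathrm{AdS}})=(\widetilde G\times\widetilde G)/\mathcal Z$ preserving a generic closed achronal subset of $\widehat{\mathrm{Ein}}_2$ (the universal cover of the conformal boundary) with at least two points; generic means not containing two points $x,\delta(x)$, $\delta$ the generator of the center of $\widetilde G$, and achronal means no two distinct points are causally related. *)

theory Defs
  imports "HOL-Analysis.Analysis" "HOL-Algebra.Group"
begin

definition QF :: "real^2^2 \<Rightarrow> real" where
  "QF x = - det x"

definition bil :: "real^2^2 \<Rightarrow> real^2^2 \<Rightarrow> real" where
  "bil x y = (QF (x + y) - QF x - QF y) / 2"

text \<open>Subsets of P(E) (resp. S(E)) are represented by cones in E - {0} invariant under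
  nonzero (resp. positive) scalings; closure/interior in P(E) correspond to closure/interior
  in E - {0} (the projection is an open quotient map).\<close>

definition proj_conv :: "(nat \<Rightarrow> 'a::real_normed_vector) \<Rightarrow> 'a \<Rightarrow> bool" where
  "proj_conv xs p \<longleftrightarrow> (\<exists>c::nat \<Rightarrow> real. (\<lambda>n. c n *\<^sub>R xs n) \<longlonglongrightarrow> p)"

text \<open>[p] is an attractive fixed point in P(E) of the projective map induced by T.\<close>
definition attr_fixed :: "('a::real_normed_vector \<Rightarrow> 'a) \<Rightarrow> 'a \<Rightarrow> bool" where
  "attr_fixed T p \<longleftrightarrow> p \<noteq> 0 \<and> (\<exists>c. T p = c *\<^sub>R p) \<and>
     (\<exists>U. open U \<and> p \<in> U \<and> (\<forall>u\<in>U. u \<noteq> 0 \<longrightarrow> proj_conv (\<lambda>n. (T ^^ n) u) p))"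

text \<open>An element of PSL(2,R) is represented by an SL(2,R) matrix, determined up to sign.\<close>
definition psl_rep :: "('g, 'b) monoid_scheme \<Rightarrow> ('g \<Rightarrow> real^2^2) \<Rightarrow> bool" where
  "psl_rep \<Gamma> L \<longleftrightarrow> (\<forall>a\<in>carrier \<Gamma>. det (L a) = 1) \<and>
     (\<forall>a\<in>carrier \<Gamma>. \<forall>b\<in>carrier \<Gamma>.
        L (a \<otimes>\<^bsub>\<Gamma>\<^esub> b) = L a ** L b \<or> L (a \<otimes>\<^bsub>\<Gamma>\<^esub> b) = - (L a ** L b))"

definition psl_eq :: "real^2^2 \<Rightarrow> real^2^2 \<Rightarrow> bool" where
  "psl_eq A B \<longleftrightarrow> A = B \<or> A = - B"

definition psl_dist :: "real^2^2 \<Rightarrow> real^2^2 \<Rightarrow> real" where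
  "psl_dist A B = min (norm (A - B)) (norm (A + B))"

definition faithful_rep :: "('g, 'b) monoid_scheme \<Rightarrow> ('g \<Rightarrow> real^2^2) \<Rightarrow> ('g \<Rightarrow> real^2^2) \<Rightarrow> bool" where
  "faithful_rep \<Gamma> L R \<longleftrightarrow> (\<forall>a\<in>carrier \<Gamma>. \<forall>b\<in>carrier \<Gamma>.
      psl_eq (L a) (L b) \<and> psl_eq (R a) (R b) \<longrightarrow> a = b)"

definition discrete_image :: "('g, 'b) monoid_scheme \<Rightarrow> ('g \<Rightarrow> real^2^2) \<Rightarrow> ('g \<Rightarrow> real^2^2) \<Rightarrow> bool" where
  "discrete_image \<Gamma> L R \<longleftrightarrow> (\<forall>a\<in>carrier \<Gamma>. \<exists>\<epsilon>>0. \<forall>b\<in>carrier \<Gamma>.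
      psl_dist (L a) (L b) < \<epsilon> \<and> psl_dist (R a) (R b) < \<epsilon> \<longrightarrow> psl_eq (L a) (L b) \<and> psl_eq (R a) (R b))"

definition conjugate_in_G :: "('g, 'b) monoid_scheme \<Rightarrow> ('g \<Rightarrow> real^2^2) \<Rightarrow> ('g \<Rightarrow> real^2^2) \<Rightarrow> bool" where
  "conjugate_in_G \<Gamma> L R \<longleftrightarrow> (\<exists>g::real^2^2. det g = 1 \<and>
      (\<forall>a\<in>carrier \<Gamma>. psl_eq (R a) (g ** L a ** matrix_inv g)))"

definition angvec :: "real \<Rightarrow> real^2" where
  "angvec \<theta> = vector [cos \<theta>, sin \<theta>]"

text \<open>Elements of the universal cover of PSL(2,R): continuous lifts f : R -> R of the projective
  action of A on RP^1 = R / pi Z (theta |-> [cos theta, sin theta]).  The generator delta of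
  the center is the translation by pi.\<close>
definition lifts_to :: "real^2^2 \<Rightarrow> (real \<Rightarrow> real) \<Rightarrow> bool" where
  "lifts_to A f \<longleftrightarrow> continuous_on UNIV f \<and>
     (\<forall>\<theta>. \<exists>c. c \<noteq> 0 \<and> A *v angvec \<theta> = c *\<^sub>R angvec (f \<theta>))"

text \<open>The conformal boundary of the universal cover of AdS, on which (G~ x G~)/Z acts, is the
  cylinder R^2 / <(pi,pi)> (null coordinates).  A subset of it is represented by its
  (pi,pi)-periodic preimage in R^2.  Distinct points are causally related iff
  (x-x')(y-y') <= 0; delta acts by (x,y) |-> (x+pi,y).\<close>
definition admissible :: "('g, 'b) monoid_scheme \<Rightarrow> ('g \<Rightarrow> real^2^2) \<Rightarrow> ('g \<Rightarrow> real^2^2) \<Rightarrow> bool" where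
  "admissible \<Gamma> L R \<longleftrightarrow> faithful_rep \<Gamma> L R \<and> discrete_image \<Gamma> L R \<and>
    (\<exists>(fL :: 'g \<Rightarrow> real \<Rightarrow> real) (fR :: 'g \<Rightarrow> real \<Rightarrow> real) (\<Lambda>h :: (real \<times> real) set).
       \<comment> \<open>lift of rho to a representation into (G~ x G~)/Z, Z the diagonal center\<close>
       (\<forall>a\<in>carrier \<Gamma>. lifts_to (L a) (fL a) \<and> lifts_to (R a) (fR a)) \<and>
       (\<forall>a\<in>carrier \<Gamma>. \<forall>b\<in>carrier \<Gamma>. \<exists>k::int. \<forall>t.
           fL (a \<otimes>\<^bsub>\<Gamma>\<^esub> b) t = fL a (fL b t) + of_int k * pi \<and>
           fR (a \<otimes>\<^bsub>\<Gamma>\<^esub> b) t = fR a (fR b t) + of_int k * pi) \<and>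
       \<comment> \<open>the preserved subset of the boundary cylinder (via periodic lift)\<close>
       (\<forall>x y. (x, y) \<in> \<Lambda>h \<longleftrightarrow> (x + pi, y + pi) \<in> \<Lambda>h) \<and>
       closed \<Lambda>h \<and>
       (\<forall>a\<in>carrier \<Gamma>. (\<lambda>(x, y). (fL a x, fR a y)) ` \<Lambda>h = \<Lambda>h) \<and>
       \<comment> \<open>at least two points\<close>
       (\<exists>x y x' y'. (x, y) \<in> \<Lambda>h \<and> (x', y') \<in> \<Lambda>h \<and>
           \<not> (\<exists>k::int. x' = x + of_int k * pi \<and> y' = y + of_int k * pi)) \<and>
       \<comment> \<open>generic\<close>
       (\<forall>x y. (x, y) \<in> \<Lambda>h \<longrightarrow> (x + pi, y) \<notin> \<Lambda>h) \<and>
       \<comment> \<open>achronal: no two distinct points causally related\<close>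
       (\<forall>x y x' y'. (x, y) \<in> \<Lambda>h \<and> (x', y') \<in> \<Lambda>h \<and> (x, y) \<noteq> (x', y') \<longrightarrow>
           (x - x') * (y - y') > 0))"

text \<open>Linear action of (g_L, g_R) on E: x |-> g_L x g_R^{-1} (defined up to sign).\<close>
definition act :: "('g \<Rightarrow> real^2^2) \<Rightarrow> ('g \<Rightarrow> real^2^2) \<Rightarrow> 'g \<Rightarrow> real^2^2 \<Rightarrow> real^2^2" where
  "act L R a x = L a ** x ** matrix_inv (R a)"

text \<open>Cone in E - {0} over the limit set overline-Lambda(rho) in P(E).\<close>
definition limit_cone :: "('g, 'b) monoid_scheme \<Rightarrow> ('g \<Rightarrow> real^2^2) \<Rightarrow> ('g \<Rightarrow> real^2^2) \<Rightarrow> (real^2^2) set" where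
  "limit_cone \<Gamma> L R = closure {p. \<exists>a\<in>carrier \<Gamma>. attr_fixed (act L R a) p} - {0}"

definition ray_invariant :: "('g, 'b) monoid_scheme \<Rightarrow> ('g \<Rightarrow> real^2^2) \<Rightarrow> ('g \<Rightarrow> real^2^2) \<Rightarrow> (real^2^2) set \<Rightarrow> bool" where
  "ray_invariant \<Gamma> L R K \<longleftrightarrow> (\<forall>a\<in>carrier \<Gamma>. \<exists>s\<in>{1, -1::real}. (\<lambda>x. s *\<^sub>R act L R a x) ` K = K)"

definition closed_ray_set :: "(real^2^2) set \<Rightarrow> bool" where
  "closed_ray_set K \<longleftrightarrow> 0 \<notin> K \<and> (\<forall>x\<in>K. \<forall>c>0. c *\<^sub>R x \<in> K) \<and> closure K - {0} \<subseteq> K"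

text \<open>Lambda(rho) in S(E): a minimal closed invariant subset of S(E) projecting injectively
  onto overline-Lambda(rho).\<close>
definition is_Lambda :: "('g, 'b) monoid_scheme \<Rightarrow> ('g \<Rightarrow> real^2^2) \<Rightarrow> ('g \<Rightarrow> real^2^2) \<Rightarrow> (real^2^2) set \<Rightarrow> bool" where
  "is_Lambda \<Gamma> L R \<Lambda> \<longleftrightarrow> closed_ray_set \<Lambda> \<and> ray_invariant \<Gamma> L R \<Lambda> \<and>
     (\<forall>K. K \<noteq> {} \<and> K \<subseteq> \<Lambda> \<and> closed_ray_set K \<and> ray_invariant \<Gamma> L R K \<longrightarrow> K = \<Lambda>) \<and>
     \<Lambda> \<inter> uminus ` \<Lambda> = {} \<and> \<Lambda> \<union> uminus ` \<Lambda> = limit_cone \<Gamma> L R"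

text \<open>Cone in E - {0} over overline-E(J), for J given as a cone.\<close>
definition E_bar :: "(real^2^2) set \<Rightarrow> (real^2^2) set \<Rightarrow> (real^2^2) set" where
  "E_bar \<Lambda> J = interior {x. QF x < 0 \<and>
      (\<forall>p\<in>\<Lambda> \<inter> J. \<forall>q\<in>\<Lambda> \<inter> J. bil x p * bil x q > 0)}"

end

theory Submission
  imports Defs
begin

(* Put D = \<Lambda> \<inter> J.  As J is a nonempty symmetric cone inside \<Lambda> \<union> -\<Lambda>, D is nonempty, and it
   is an invariant positive cone in \<Lambda>; by minimality of \<Lambda>, closure D - {0} = \<Lambda>, i.e. D is dense
   in \<Lambda>.  Membership in E(J) only controls the signs of <x|p> for p \<in> D.  On the open set E(J)
   these signs extend by continuity to all of closure D \<supseteq> \<Lambda>, and <x|p> cannot vanish for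
   p \<in> \<Lambda>: the linear form <.|p> is nonzero, so a small perturbation of x inside E(J) would
   make it change sign.

   The hypotheses on \<Gamma>, admissibility and non-conjugacy serve in the paper to produce the
   minimal set \<Lambda>(\<rho>); here that set is supplied by is_Lambda. *)

lemma linear_times_continuous_takes_negative_value:
  fixes f g :: "'a::real_normed_vector \<Rightarrow> real"
  assumes "linear f" "f w \<noteq> 0" "f x = 0" "isCont g x" "g x \<noteq> 0" "open U" "x \<in> U"
  shows "\<exists>y\<in>U. f y * g y < 0"
proof -
  \<comment> \<open>moving from x in direction v, f takes the sign opposite to g x\<close>
  define v where "v = - (f w * g x) *\<^sub>R w"
  have "f v * g x = - (f w * g x)\<^sup>2"
    by (simp add: v_def linear_neg[OF assms(1)] linear_scale[OF assms(1)] power2_eq_square)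
  then have fv: "f v * g x < 0"
    using assms(2,5) by simp
  have path: "((\<lambda>s. x + s *\<^sub>R v) \<longlongrightarrow> x) (at_right 0)"
    by (auto intro!: tendsto_eq_intros)
  have "\<forall>\<^sub>F s in at_right 0. x + s *\<^sub>R v \<in> U"
    using topological_tendstoD[OF path assms(6,7)] .
  moreover have "((\<lambda>s. f v * g (x + s *\<^sub>R v)) \<longlongrightarrow> f v * g x) (at_right 0)"
    using isCont_tendsto_compose[OF assms(4) path] by (rule tendsto_mult_left)
  then have "\<forall>\<^sub>F s in at_right 0. f v * g (x + s *\<^sub>R v) < 0"
    using fv by (rule order_tendstoD(2))
  moreover have "\<forall>\<^sub>F s in at_right (0::real). 0 < s"
    by (rule eventually_at_right_less)
  ultimately have "\<forall>\<^sub>F s in at_right 0. x + s *\<^sub>R v \<in> U \<and> f v * g (x + s *\<^sub>R v) < 0 \<and> 0 < s"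
    by (intro eventually_conj)
  then obtain s where "x + s *\<^sub>R v \<in> U" "f v * g (x + s *\<^sub>R v) < 0" "0 < s"
    using eventually_happens'[OF trivial_limit_at_right_real] by blast
  moreover have "f (x + s *\<^sub>R v) = s * f v"
    using assms(1,3) by (simp add: linear_add linear_scale)
  ultimately show ?thesis
    by (metis mult.assoc mult_pos_neg)
qed

lemma interior_sign_agreement_extends_to_closure:
  fixes B :: "'a::real_normed_vector \<Rightarrow> 'b::real_normed_vector \<Rightarrow> real"
  assumes B: "bounded_bilinear B" and P: "P \<subseteq> closure D"
    and nondegenerate: "\<And>p. p \<in> P \<Longrightarrow> \<exists>w. B w p \<noteq> 0"
  shows "interior {x. \<forall>p\<in>D. \<forall>q\<in>D. 0 < B x p * B x q} \<subseteq> {x. \<forall>p\<in>P. \<forall>q\<in>P. 0 < B x p * B x q}"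
    (is "interior ?S \<subseteq> _")
proof
  fix x assume x: "x \<in> interior ?S"
  show "x \<in> {x. \<forall>p\<in>P. \<forall>q\<in>P. 0 < B x p * B x q}"
  proof (cases "D = {}")
    case True
    then show ?thesis using P by simp
  next
    case False
    \<comment> \<open>on the interior, every B y p with p \<in> D has the sign of B y d\<close>
    then obtain d where d: "d \<in> D" by blast
    have nonneg: "0 \<le> B y p * B y d" if y: "y \<in> interior ?S" and p: "p \<in> closure D" for y p
    proof -
      have "D \<subseteq> {p. 0 \<le> B y p * B y d}"
        using interior_subset y d by fastforce
      moreover have "closed {p. 0 \<le> B y p * B y d}"
        using bounded_bilinear.bounded_linear_right[OF B, of y]
        by (intro closed_Collect_le continuous_intros) (auto intro: linear_continuous_on)
      ultimately show ?thesis
        using closure_minimal p by blast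
    qed
    have Bxd: "B x d \<noteq> 0"
      using interior_subset x d by fastforce
    have "0 < B x p * B x d" if p: "p \<in> P" for p
    proof -
      have "B x p \<noteq> 0"
      proof
        assume "B x p = 0"
        obtain w where "B w p \<noteq> 0" using nondegenerate p by blast
        have "linear (\<lambda>y. B y p)"
          using bounded_bilinear.bounded_linear_left[OF B] bounded_linear.linear by blast
        moreover have "isCont (\<lambda>y. B y d) x"
          using bounded_bilinear.bounded_linear_left[OF B] linear_continuous_at by blast
        ultimately obtain y where "y \<in> interior ?S" "B y p * B y d < 0"
          using linear_times_continuous_takes_negative_value[of "\<lambda>y. B y p" w x "\<lambda>y. B y d"]
            \<open>B w p \<noteq> 0\<close> \<open>B x p = 0\<close> Bxd x open_interior by blast
        then show False
          using nonneg P p by fastforce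
      qed
      moreover have "0 \<le> B x p * B x d"
        using nonneg[OF x] P p by blast
      ultimately show ?thesis
        using Bxd by (simp add: order_less_le)
    qed
    then show ?thesis
      by (simp add: zero_less_mult_iff) (meson not_less_iff_gr_or_eq)
  qed
qed

lemma bil_formula: "bil x y = - (x$1$1 * y$2$2 + x$2$2 * y$1$1 - x$1$2 * y$2$1 - x$2$1 * y$1$2) / 2"
  unfolding bil_def QF_def det_2 by (simp add: algebra_simps)

lemma bounded_bilinear_bil: "bounded_bilinear bil"
  unfolding bilinear_conv_bounded_bilinear[symmetric] bilinear_def
  by (auto intro!: linearI simp: bil_formula field_simps)

lemma bil_nondegenerate:
  assumes "p \<noteq> 0"
  shows "\<exists>w. bil w p \<noteq> 0"
proof (rule ccontr)
  assume "\<nexists>w. bil w p \<noteq> 0"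
  then have unit: "bil (\<chi> i j. if i = k \<and> j = l then 1 else 0) p = 0" for k l :: 2
    by blast
  have "p = 0"
    using unit[of 1 1] unit[of 1 2] unit[of 2 1] unit[of 2 2]
    by (simp add: bil_formula vec_eq_iff forall_2)
  then show False
    using assms by blast
qed

lemma E_bar_eq_if_dense:
  assumes "\<Lambda> \<inter> J \<subseteq> \<Lambda> \<inter> K" "\<Lambda> \<inter> K \<subseteq> closure (\<Lambda> \<inter> J)" "0 \<notin> \<Lambda>"
  shows "E_bar \<Lambda> J = E_bar \<Lambda> K"
proof -
  define S where "S X = {x. \<forall>p\<in>X. \<forall>q\<in>X. 0 < bil x p * bil x q}" for X
  have E: "E_bar \<Lambda> X = interior ({x. QF x < 0} \<inter> S (\<Lambda> \<inter> X))" for X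
    unfolding E_bar_def S_def Collect_conj_eq ..
  have "S (\<Lambda> \<inter> K) \<subseteq> S (\<Lambda> \<inter> J)"
    using assms(1) unfolding S_def by blast
  then have "E_bar \<Lambda> K \<subseteq> E_bar \<Lambda> J"
    unfolding E by (intro interior_mono) blast
  moreover have "interior (S (\<Lambda> \<inter> J)) \<subseteq> S (\<Lambda> \<inter> K)"
    unfolding S_def
    by (rule interior_sign_agreement_extends_to_closure[OF bounded_bilinear_bil assms(2)])
      (use assms(3) in \<open>blast intro: bil_nondegenerate\<close>)
  then have "interior ({x. QF x < 0} \<inter> S (\<Lambda> \<inter> J)) \<subseteq> {x. QF x < 0} \<inter> S (\<Lambda> \<inter> K)"
    using interior_subset[of "{x. QF x < 0}"] unfolding interior_Int by blast
  then have "E_bar \<Lambda> J \<subseteq> E_bar \<Lambda> K"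
    unfolding E by (rule interior_maximal) (rule open_interior)
  ultimately show ?thesis
    by blast
qed

lemma matrix_inv_mult_left:
  fixes A :: "'a::semiring_1^'n^'m"
  assumes "invertible A"
  shows "matrix_inv A ** A = mat 1"
  using someI_ex[OF assms[unfolded invertible_def]] by (simp add: matrix_inv_def)

lemma psl_rep_invertible: "psl_rep \<Gamma> L \<Longrightarrow> a \<in> carrier \<Gamma> \<Longrightarrow> invertible (L a)"
  unfolding psl_rep_def invertible_det_nz by auto

lemma matrix_add_rdistrib:
  fixes A B :: "'a::semiring_1^'n^'m"
  shows "(A + B) ** C = A ** C + B ** C"
  by (simp add: matrix_matrix_mult_def vec_eq_iff sum.distrib distrib_right)

lemma linear_act: "linear (act L R a)"
proof (rule linearI)
  show "act L R a (x + y) = act L R a x + act L R a y" for x y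
    by (simp only: act_def matrix_add_ldistrib matrix_add_rdistrib)
  show "act L R a (c *\<^sub>R x) = c *\<^sub>R act L R a x" for c x
    by (simp only: act_def matrix_scalar_ac scalar_matrix_assoc[symmetric])
qed

lemma act_left_inverse:
  assumes "invertible (L a)" "invertible (R a)"
  shows "matrix_inv (L a) ** act L R a x ** R a = x"
proof -
  have "matrix_inv (L a) ** act L R a x ** R a
      = (matrix_inv (L a) ** L a) ** x ** (matrix_inv (R a) ** R a)"
    by (simp add: act_def matrix_mul_assoc)
  then show ?thesis
    by (simp add: assms matrix_inv_mult_left)
qed

lemma inj_act: "invertible (L a) \<Longrightarrow> invertible (R a) \<Longrightarrow> inj (act L R a)"
  by (rule inj_on_inverseI[where g = "\<lambda>y. matrix_inv (L a) ** y ** R a"]) (rule act_left_inverse)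

lemma inj_signed_act:
  assumes "psl_rep \<Gamma> L" "psl_rep \<Gamma> R" "a \<in> carrier \<Gamma>" "s \<noteq> 0"
  shows "inj (\<lambda>x. s *\<^sub>R act L R a x)"
proof -
  have "inj (act L R a)"
    using assms(1-3) by (intro inj_act psl_rep_invertible)
  then show ?thesis
    using assms(4) by (simp add: inj_def)
qed

lemma image_scaleR_cone:
  fixes J :: "'a::real_vector set"
  assumes "\<forall>x\<in>J. \<forall>c::real. c \<noteq> 0 \<longrightarrow> c *\<^sub>R x \<in> J" "s \<noteq> 0"
  shows "(*\<^sub>R) s ` J = J"
proof
  show "(*\<^sub>R) s ` J \<subseteq> J"
    using assms by blast
  show "J \<subseteq> (*\<^sub>R) s ` J"
  proof
    fix y assume "y \<in> J"
    then have "inverse s *\<^sub>R y \<in> J"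
      using assms by simp
    moreover have "y = s *\<^sub>R (inverse s *\<^sub>R y)"
      using assms(2) by simp
    ultimately show "y \<in> (*\<^sub>R) s ` J"
      by blast
  qed
qed

lemma ray_invariant_Int_cone:
  assumes "psl_rep \<Gamma> L" "psl_rep \<Gamma> R" "ray_invariant \<Gamma> L R K"
    and "\<forall>x\<in>J. \<forall>c::real. c \<noteq> 0 \<longrightarrow> c *\<^sub>R x \<in> J" "\<forall>a\<in>carrier \<Gamma>. act L R a ` J = J"
  shows "ray_invariant \<Gamma> L R (K \<inter> J)"
  unfolding ray_invariant_def
proof
  fix a assume a: "a \<in> carrier \<Gamma>"
  then obtain s where s: "s \<in> {1, -1::real}" and sK: "(\<lambda>x. s *\<^sub>R act L R a x) ` K = K"
    using assms(3) unfolding ray_invariant_def by blast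
  have "(\<lambda>x. s *\<^sub>R act L R a x) ` J = (*\<^sub>R) s ` act L R a ` J"
    by (simp add: image_image)
  also have "\<dots> = (*\<^sub>R) s ` J"
    using a assms(5) by simp
  also have "\<dots> = J"
    using s assms(4) by (intro image_scaleR_cone) auto
  moreover have "inj (\<lambda>x. s *\<^sub>R act L R a x)"
    using s by (intro inj_signed_act[OF assms(1,2) a]) auto
  ultimately have "(\<lambda>x. s *\<^sub>R act L R a x) ` (K \<inter> J) = K \<inter> J"
    using sK by (simp add: image_Int)
  then show "\<exists>s\<in>{1, -1::real}. (\<lambda>x. s *\<^sub>R act L R a x) ` (K \<inter> J) = K \<inter> J"
    using s by blast
qed

lemma ray_invariant_closure:
  assumes "psl_rep \<Gamma> L" "psl_rep \<Gamma> R" "ray_invariant \<Gamma> L R K"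
  shows "ray_invariant \<Gamma> L R (closure K - {0})"
  unfolding ray_invariant_def
proof
  fix a assume a: "a \<in> carrier \<Gamma>"
  then obtain s where s: "s \<in> {1, -1::real}" and sK: "(\<lambda>x. s *\<^sub>R act L R a x) ` K = K"
    using assms(3) unfolding ray_invariant_def by blast
  define f where "f = (\<lambda>x. s *\<^sub>R act L R a x)"
  have "linear f"
    unfolding f_def by (rule linear_compose_scale_right[OF linear_act])
  moreover have "inj f"
    unfolding f_def using s by (intro inj_signed_act[OF assms(1,2) a]) auto
  ultimately have f: "linear f" "inj f"
    by blast+
  have "f ` (closure K - {0}) = f ` closure K - f ` {0}"
    by (rule image_set_diff[OF f(2)])
  also have "\<dots> = closure (f ` K) - {0}"
    by (simp add: closure_injective_linear_image[OF f] linear_0[OF f(1)])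
  also have "\<dots> = closure K - {0}"
    using sK by (simp only: f_def)
  finally show "\<exists>s\<in>{1, -1::real}. (\<lambda>x. s *\<^sub>R act L R a x) ` (closure K - {0}) = closure K - {0}"
    using s unfolding f_def by blast
qed

lemma closed_ray_set_closure:
  assumes "\<forall>x\<in>D. \<forall>c>0. c *\<^sub>R x \<in> D"
  shows "closed_ray_set (closure D - {0})"
  unfolding closed_ray_set_def
proof (intro conjI ballI allI impI)
  fix x and c :: real assume x: "x \<in> closure D - {0}" and c: "c > 0"
  have "(*\<^sub>R) c ` D \<subseteq> D"
    using assms c by blast
  then have "(*\<^sub>R) c ` closure D \<subseteq> closure D"
    unfolding closure_scaleR by (rule closure_mono)
  moreover have "c *\<^sub>R x \<noteq> 0"
    using x c by simp
  ultimately show "c *\<^sub>R x \<in> closure D - {0}"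
    using x by blast
next
  have "closure (closure D - {0}) \<subseteq> closure D"
    using closure_mono[of "closure D - {0}" "closure D"] by simp
  then show "closure (closure D - {0}) - {0} \<subseteq> closure D - {0}"
    by blast
qed simp

lemma is_Lambda_subset_closure:
  assumes "psl_rep \<Gamma> L" "psl_rep \<Gamma> R" "is_Lambda \<Gamma> L R \<Lambda>"
    and "D \<noteq> {}" "D \<subseteq> \<Lambda>" "\<forall>x\<in>D. \<forall>c>0. c *\<^sub>R x \<in> D" "ray_invariant \<Gamma> L R D"
  shows "\<Lambda> \<subseteq> closure D"
proof -
  have \<Lambda>: "closed_ray_set \<Lambda>"
    and minimal: "\<And>K. K \<noteq> {} \<Longrightarrow> K \<subseteq> \<Lambda> \<Longrightarrow> closed_ray_set K \<Longrightarrow> ray_invariant \<Gamma> L R K \<Longrightarrow> K = \<Lambda>"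
    using assms(3) unfolding is_Lambda_def by auto
  have "closure D - {0} = \<Lambda>"
  proof (rule minimal)
    show "closure D - {0} \<noteq> {}"
      using \<Lambda> assms(4,5) closure_subset unfolding closed_ray_set_def by blast
    show "closure D - {0} \<subseteq> \<Lambda>"
      using \<Lambda> closure_mono[OF assms(5)] unfolding closed_ray_set_def by blast
    show "closed_ray_set (closure D - {0})"
      by (rule closed_ray_set_closure[OF assms(6)])
    show "ray_invariant \<Gamma> L R (closure D - {0})"
      by (rule ray_invariant_closure[OF assms(1,2,7)])
  qed
  then show ?thesis
    by blast
qed

lemma Int_nonempty_if_symmetric:
  fixes J :: "'a::real_vector set"
  assumes "J \<subseteq> \<Lambda> \<union> uminus ` \<Lambda>" "J \<noteq> {}" "\<forall>x\<in>J. \<forall>c::real. c \<noteq> 0 \<longrightarrow> c *\<^sub>R x \<in> J"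
  shows "\<Lambda> \<inter> J \<noteq> {}"
proof -
  obtain x where x: "x \<in> J"
    using assms(2) by blast
  moreover have "-x \<in> J"
    using assms(3) x by (metis scaleR_minus1_left zero_neq_neg_one)
  moreover have "x \<in> \<Lambda> \<or> -x \<in> \<Lambda>"
    using assms(1) x by auto
  ultimately show ?thesis
    by blast
qed

theorem mainTheorem8:
  fixes \<Gamma> :: "('g, 'b) monoid_scheme"
    and L R :: "'g \<Rightarrow> real^2^2"
    and \<Lambda> J :: "(real^2^2) set"
  assumes "group \<Gamma>"
    and "\<exists>a\<in>carrier \<Gamma>. \<exists>b\<in>carrier \<Gamma>. a \<otimes>\<^bsub>\<Gamma>\<^esub> b \<noteq> b \<otimes>\<^bsub>\<Gamma>\<^esub> a"
    and "\<forall>a\<in>carrier \<Gamma>. a \<noteq> \<one>\<^bsub>\<Gamma>\<^esub> \<longrightarrow> (\<forall>n::nat. n > 0 \<longrightarrow> a [^]\<^bsub>\<Gamma>\<^esub> n \<noteq> \<one>\<^bsub>\<Gamma>\<^esub>)"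
    and "psl_rep \<Gamma> L" and "psl_rep \<Gamma> R"
    and "admissible \<Gamma> L R"
    and "\<not> conjugate_in_G \<Gamma> L R"
    and "is_Lambda \<Gamma> L R \<Lambda>"
    and "J \<noteq> {}" and "J \<subseteq> limit_cone \<Gamma> L R"
    and "\<forall>x\<in>J. \<forall>c::real. c \<noteq> 0 \<longrightarrow> c *\<^sub>R x \<in> J"
    and "\<forall>a\<in>carrier \<Gamma>. act L R a ` J = J"
  shows "E_bar \<Lambda> J = E_bar \<Lambda> (limit_cone \<Gamma> L R)"
proof -
  have \<Lambda>: "closed_ray_set \<Lambda>" "ray_invariant \<Gamma> L R \<Lambda>"
    and cover: "\<Lambda> \<union> uminus ` \<Lambda> = limit_cone \<Gamma> L R"
    using assms(8) unfolding is_Lambda_def by auto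
  have "\<Lambda> \<subseteq> closure (\<Lambda> \<inter> J)"
  proof (rule is_Lambda_subset_closure[OF assms(4,5,8)])
    show "\<Lambda> \<inter> J \<noteq> {}"
      using assms(9-11) cover by (intro Int_nonempty_if_symmetric) auto
    show "\<forall>x\<in>\<Lambda> \<inter> J. \<forall>c>0. c *\<^sub>R x \<in> \<Lambda> \<inter> J"
      using \<Lambda>(1) assms(11) unfolding closed_ray_set_def by simp
    show "ray_invariant \<Gamma> L R (\<Lambda> \<inter> J)"
      by (rule ray_invariant_Int_cone[OF assms(4,5) \<Lambda>(2) assms(11,12)])
  qed blast
  moreover have "\<Lambda> \<inter> limit_cone \<Gamma> L R = \<Lambda>"
    using cover by blast
  moreover have "0 \<notin> \<Lambda>"
    using \<Lambda>(1) unfolding closed_ray_set_def by blast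
  ultimately show ?thesis
    by (intro E_bar_eq_if_dense) simp_all
qed

end
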